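(* Let $\varepsilon>0$, $\eta^\varepsilon_{\mu\nu}=\mathrm{diag}(1-i\varepsilon,-1,-1,-1)$, and for $x=(x_0,\mathbf{x})\in\mathbb{R}^4$ set $z^2=\eta^\varepsilon_{\mu\nu}x^\mu x^\nu=(1-i\varepsilon)x_0^2-\mathbf{x}^2$ and $x_E^2=x_0^2+\mathbf{x}^2$. Then $$|\sqrt{-z^2}|\le(1+\varepsilon^2)^{1/4}|x_E|,\qquad |\sqrt{-z^2}|\ge\Big(\tfrac1\varepsilon+\sqrt{1+\tfrac{1}{\varepsilon^2}}\Big)^{-1/2}|x_E|.$$ *)

theory Defs
  imports "HOL-Analysis.Analysis"
begin

definition zsq :: "real \<Rightarrow> real \<Rightarrow> real^3 \<Rightarrow> complex" where
  "zsq eps x0 xv = (1 - \<i> * complex_of_real eps) * complex_of_real (x0^2) - complex_of_real ((norm xv)^2)"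

definition xEsq :: "real \<Rightarrow> real^3 \<Rightarrow> real" where
  "xEsq x0 xv = x0^2 + (norm xv)^2"

end

theory Submission
  imports Defs
begin

text \<open>With \<open>a = x\<^sub>0\<^sup>2\<close> and \<open>r = |\<^bold>x|\<^sup>2\<close> one has \<open>-z\<^sup>2 = (r - a) + i\<epsilon>a\<close>, so everything reduces to
  comparing the modulus of this number with \<open>a + r = x\<^sub>E\<^sup>2\<close>. The upper bound is immediate from
  \<open>|r - a| \<le> a + r\<close> and \<open>a \<le> a + r\<close>. For the lower bound, the identity
  \<open>(4 + \<epsilon>\<^sup>2)((r - a)\<^sup>2 + \<epsilon>\<^sup>2a\<^sup>2) - \<epsilon>\<^sup>2(a + r)\<^sup>2 = (2(r - a) - \<epsilon>\<^sup>2a)\<^sup>2\<close> gives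
  \<open>\<epsilon>(a + r) \<le> \<surd>(4 + \<epsilon>\<^sup>2) |z\<^sup>2|\<close>, and \<open>\<surd>(4 + \<epsilon>\<^sup>2) \<le> 1 + \<surd>(1 + \<epsilon>\<^sup>2) = \<epsilon>(1/\<epsilon> + \<surd>(1 + 1/\<epsilon>\<^sup>2))\<close>.
  Taking square roots, using \<open>|\<surd>w| = \<surd>|w|\<close>, yields both inequalities.\<close>

lemma minus_zsq_eq: "- zsq eps x0 xv = Complex ((norm xv)^2 - x0^2) (eps * x0^2)"
  by (simp add: complex_eq_iff zsq_def)

lemma cmod_Complex_diff_le:
  fixes a r e :: real
  assumes "a \<ge> 0" "r \<ge> 0"
  shows "cmod (Complex (r - a) (e * a)) \<le> sqrt (1 + e^2) * (a + r)"
proof -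
  have "(r - a)^2 \<le> (a + r)^2"
    using assms by (simp add: power2_eq_square algebra_simps)
  moreover have "(e * a)^2 \<le> e^2 * (a + r)^2"
    using assms by (simp add: power_mult_distrib mult_left_mono power_mono)
  ultimately have "(r - a)^2 + (e * a)^2 \<le> ((1 + e^2) * (a + r)^2)"
    by (simp add: algebra_simps)
  then have "cmod (Complex (r - a) (e * a)) \<le> sqrt ((1 + e^2) * (a + r)^2)"
    by (simp add: cmod_def)
  also have "\<dots> = sqrt (1 + e^2) * (a + r)"
    using assms by (simp add: real_sqrt_mult)
  finally show ?thesis .
qed

lemma four_plus_square_le: "4 + e^2 \<le> (1 + sqrt (1 + e^2))^2"
proof -
  have "(1 + sqrt (1 + e^2))^2 = 2 + e^2 + 2 * sqrt (1 + e^2)"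
    by (simp add: power2_eq_square algebra_simps)
  moreover have "sqrt (1 + e^2) \<ge> 1" by simp
  ultimately show ?thesis by linarith
qed

lemma cmod_Complex_diff_ge:
  fixes a r e :: real
  assumes "a \<ge> 0" "r \<ge> 0"
  shows "\<bar>e\<bar> * (a + r) \<le> (1 + sqrt (1 + e^2)) * cmod (Complex (r - a) (e * a))"
proof -
  define m where "m = (r - a)^2 + (e * a)^2"
  have "m * (4 + e^2) - e^2 * (a + r)^2 = (2 * (r - a) - e^2 * a)^2"
    unfolding m_def by (simp add: power2_eq_square algebra_simps)
  then have "(e * (a + r))^2 \<le> m * (4 + e^2)"
    by (smt (verit) power_mult_distrib zero_le_power2)
  also have "\<dots> \<le> m * (1 + sqrt (1 + e^2))^2"
    using four_plus_square_le by (simp add: m_def mult_left_mono)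
  finally have "\<bar>e * (a + r)\<bar> \<le> sqrt (m * (1 + sqrt (1 + e^2))^2)"
    using real_sqrt_le_mono by fastforce
  also have "\<dots> = (1 + sqrt (1 + e^2)) * sqrt m"
    by (simp add: real_sqrt_mult add_nonneg_nonneg)
  finally show ?thesis
    using assms by (simp add: m_def cmod_def abs_mult)
qed

lemma inv_plus_sqrt_one_plus_inv_square:
  fixes e :: real
  assumes "e > 0"
  shows "1/e + sqrt (1 + 1/e^2) = (1 + sqrt (1 + e^2)) / e"
proof -
  have "sqrt (1 + 1/e^2) = sqrt ((1 + e^2) / e^2)"
    using assms by (simp add: field_simps)
  also have "\<dots> = sqrt (1 + e^2) / e"
    using assms by (simp add: real_sqrt_divide)
  finally show ?thesis by (simp add: add_divide_distrib)
qed

lemma powr_one_quarter: "x \<ge> 0 \<Longrightarrow> x powr (1/4) = sqrt (sqrt (x::real))"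
proof -
  assume "x \<ge> 0"
  have "x powr (1/4) = (x powr (1/2)) powr (1/2)" by (simp add: powr_powr)
  with \<open>x \<ge> 0\<close> show ?thesis by (simp add: powr_half_sqrt)
qed

lemma powr_minus_half: "x > 0 \<Longrightarrow> x powr (-1/2) = 1 / sqrt (x::real)"
  by (simp add: powr_minus_divide powr_half_sqrt)

theorem lemma4:
  fixes eps x0 :: real and xv :: "real^3"
  assumes "eps > 0"
  shows "cmod (csqrt (- zsq eps x0 xv)) \<le> (1 + eps^2) powr (1/4) * sqrt (xEsq x0 xv) \<and>
         cmod (csqrt (- zsq eps x0 xv)) \<ge> (1/eps + sqrt (1 + 1/eps^2)) powr (-1/2) * sqrt (xEsq x0 xv)"
proof -
  define w where "w = - zsq eps x0 xv"
  define c where "c = 1 + sqrt (1 + eps^2)"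
  have c: "c > 0" by (simp add: c_def add_pos_nonneg)
  have x: "xEsq x0 xv = x0^2 + (norm xv)^2" by (simp add: xEsq_def)
  have root: "cmod (csqrt w) = sqrt (cmod w)" by (rule norm_csqrt)
  have "cmod w \<le> sqrt (1 + eps^2) * xEsq x0 xv"
    using cmod_Complex_diff_le[of "x0^2" "(norm xv)^2" eps] by (simp add: w_def minus_zsq_eq x)
  then have "sqrt (cmod w) \<le> sqrt (sqrt (1 + eps^2)) * sqrt (xEsq x0 xv)"
    by (metis real_sqrt_le_mono real_sqrt_mult)
  moreover have "eps * xEsq x0 xv \<le> c * cmod w"
    using cmod_Complex_diff_ge[of "x0^2" "(norm xv)^2" eps] assms
    by (simp add: w_def c_def minus_zsq_eq x)
  then have "sqrt (eps / c) * sqrt (xEsq x0 xv) \<le> sqrt (cmod w)"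
    using c by (simp add: real_sqrt_mult[symmetric] field_simps)
  moreover have "(1/eps + sqrt (1 + 1/eps^2)) powr (-1/2) = sqrt (eps / c)"
  proof -
    have "1/eps + sqrt (1 + 1/eps^2) = c / eps"
      using assms by (simp add: inv_plus_sqrt_one_plus_inv_square c_def)
    then show ?thesis
      using assms c powr_minus_half[of "c / eps"] by (simp add: real_sqrt_divide)
  qed
  ultimately show ?thesis
    by (simp add: root w_def powr_one_quarter)
qed

end
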